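(* Let $\alpha\in\ell^0(\mathbb{Z})$ with $\operatorname{supp}\alpha=I$, let $u=\sum_{i\in\mathbb{Z}}\alpha_i e_i$ be the source, $v=Ku$, and let $v^\varepsilon$ be noisy data with $\|v^\varepsilon-v\|\le\varepsilon$, with noise-to-signal ratio \[ r_{\varepsilon/\alpha}:=\frac{\sup_{i\in\mathbb{Z}}|\langle v^\varepsilon-v,d_i\rangle|}{\min_{i\in I}|\alpha_i|\,\|Ke_i\|}<\frac12. \] Suppose the $\varepsilon$ERC holds, i.e. $\sup_{i\in I}\sum_{j\in I,\,j\neq i}|\langle d_i,d_j\rangle|<1$ and \[ \sup_{d\in\mathscr{D}(I^\complement)}\big\|(DP_I)^\dagger d\big\|_{\ell^1}<1-2\,r_{\varepsilon/\alpha}\,\frac{1}{1-\sup_{i\in I}\sum_{j\in I,\,j\neq i}|\langle d_i,d_j\rangle|}. \] Then there exists a constant $C>0$ such that the approximate solution $\hat\alpha$ determined by OMP satisfies $\|\hat\alpha-\alpha\|_{\ell^1}\le C\varepsilon$.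
   Context: $B$ is a Banach space, $H$ a real Hilbert space, and $K:B\to H$ a bounded, injective, linear operator. $\mathscr{E}=\{e_i\}_{i\in\mathbb{Z}}\subset B$ is a family of unit-norm vectors, $d_i:=Ke_i/\|Ke_i\|$, $\mathscr{D}=\{d_i\}$, $\mathscr{E}(J)=\{e_i:i\in J\}$, $\mathscr{D}(J)=\{d_i:i\in J\}$ for $J\subset\mathbb{Z}$, $I^\complement=\mathbb{Z}\setminus I$. $D:\ell^1\to H$, $D\beta=\sum_i\beta_id_i$; $P_J$ is the coordinate projection onto $J$ in $\ell^1$; $(DP_I)^\dagger$ is the pseudoinverse of $DP_I$. Orthogonal Matching Pursuit (OMP) with parameter $\varepsilon$ on data $v^\varepsilon$: set $k=0$, $I^0=\emptyset$, $r^0=v^\varepsilon$, $\hat u^0=0$; while $\|r^k\|>\varepsilon$: $k:=k+1$, choose $i_k\in\operatorname{argsup}_i|\langle r^{k-1},d_i\rangle|$, $I^k=I^{k-1}\cup\{i_k\}$, $\hat u^k\in\operatorname{argmin}\{\|v^\varepsilon-K\hat u\|^2:\hat u\in\operatorname{span}\mathscr{E}(I^k)\}$, $r^k=v^\varepsilon-K\hat u^k$. The approximate solution $\hat\alpha$ is the coefficient vector of the final iterate, $\hat u=\sum_i\hat\alpha_ie_i$ (with $\hat\alpha_i=0$ for non-selected indices). *)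

theory Defs
  imports "HOL-Analysis.Analysis"
begin

definition dict :: "('b::real_normed_vector \<Rightarrow> 'h::real_normed_vector) \<Rightarrow> (int \<Rightarrow> 'b) \<Rightarrow> int \<Rightarrow> 'h" where
  "dict K e i = (1 / norm (K (e i))) *\<^sub>R K (e i)"

definition l1norm :: "(int \<Rightarrow> real) \<Rightarrow> real" where
  "l1norm x = infsum (\<lambda>i. \<bar>x i\<bar>) UNIV"

definition supp :: "(int \<Rightarrow> real) \<Rightarrow> int set" where
  "supp x = {i. x i \<noteq> 0}"

definition lsq_sol :: "('b::real_normed_vector \<Rightarrow> 'h::real_normed_vector) \<Rightarrow> (int \<Rightarrow> 'b) \<Rightarrow> int set \<Rightarrow> 'h \<Rightarrow> (int \<Rightarrow> real) \<Rightarrow> bool" where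
  "lsq_sol K e I h \<beta> \<longleftrightarrow> (\<forall>i. i \<notin> I \<longrightarrow> \<beta> i = 0) \<and>
     (\<forall>\<gamma>. (\<forall>i. i \<notin> I \<longrightarrow> \<gamma> i = 0) \<longrightarrow>
        norm (h - (\<Sum>i\<in>I. \<beta> i *\<^sub>R dict K e i)) \<le> norm (h - (\<Sum>i\<in>I. \<gamma> i *\<^sub>R dict K e i)))"

text \<open>Moore--Penrose pseudoinverse (D P_I)^dagger: the minimal (Euclidean) norm
  least-squares solution, supported on the finite set I.\<close>
definition pinv :: "('b::real_normed_vector \<Rightarrow> 'h::real_normed_vector) \<Rightarrow> (int \<Rightarrow> 'b) \<Rightarrow> int set \<Rightarrow> 'h \<Rightarrow> (int \<Rightarrow> real)" where
  "pinv K e I h = (THE \<beta>. lsq_sol K e I h \<beta> \<and>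
      (\<forall>\<gamma>. lsq_sol K e I h \<gamma> \<longrightarrow> (\<Sum>i\<in>I. (\<beta> i)\<^sup>2) \<le> (\<Sum>i\<in>I. (\<gamma> i)\<^sup>2)))"

definition coh :: "('b::real_normed_vector \<Rightarrow> 'h::real_inner) \<Rightarrow> (int \<Rightarrow> 'b) \<Rightarrow> int set \<Rightarrow> real" where
  "coh K e I = (if I = {} then 0 else
     Max ((\<lambda>i. \<Sum>j\<in>I - {i}. \<bar>dict K e i \<bullet> dict K e j\<bar>) ` I))"

text \<open>Noise-to-signal ratio r_{eps/alpha}; v = K u with u = sum alpha_i e_i.
  (If alpha = 0 the minimum over the empty set is +infinity, so the ratio is 0.)\<close>
definition nsr :: "('b::real_normed_vector \<Rightarrow> 'h::real_inner) \<Rightarrow> (int \<Rightarrow> 'b) \<Rightarrow> (int \<Rightarrow> real) \<Rightarrow> 'h \<Rightarrow> real" where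
  "nsr K e \<alpha> v\<epsilon> = (if supp \<alpha> = {} then 0 else
     (SUP i. \<bar>(v\<epsilon> - K (\<Sum>j\<in>supp \<alpha>. \<alpha> j *\<^sub>R e j)) \<bullet> dict K e i\<bar>)
       / Min ((\<lambda>i. \<bar>\<alpha> i\<bar> * norm (K (e i))) ` supp \<alpha>))"

text \<open>Reachable OMP states: (selected index set J, coefficients beta of the iterate
  u^k = sum_{i in J} beta_i e_i, supported on J).\<close>
inductive omp_reach :: "('b::real_normed_vector \<Rightarrow> 'h::real_inner) \<Rightarrow> (int \<Rightarrow> 'b) \<Rightarrow> real \<Rightarrow> 'h \<Rightarrow> int set \<Rightarrow> (int \<Rightarrow> real) \<Rightarrow> bool"
  for K e \<epsilon> v\<epsilon> where
  init: "omp_reach K e \<epsilon> v\<epsilon> {} (\<lambda>_. 0)"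
| step: "\<lbrakk> omp_reach K e \<epsilon> v\<epsilon> J \<beta>;
           norm (v\<epsilon> - K (\<Sum>i\<in>J. \<beta> i *\<^sub>R e i)) > \<epsilon>;
           \<forall>j. \<bar>(v\<epsilon> - K (\<Sum>i\<in>J. \<beta> i *\<^sub>R e i)) \<bullet> dict K e j\<bar>
                 \<le> \<bar>(v\<epsilon> - K (\<Sum>i\<in>J. \<beta> i *\<^sub>R e i)) \<bullet> dict K e k\<bar>;
           \<forall>i. i \<notin> insert k J \<longrightarrow> \<beta>' i = 0;
           \<forall>\<gamma>. (\<forall>i. i \<notin> insert k J \<longrightarrow> \<gamma> i = 0) \<longrightarrow>
              (norm (v\<epsilon> - K (\<Sum>i\<in>insert k J. \<beta>' i *\<^sub>R e i)))\<^sup>2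
                \<le> (norm (v\<epsilon> - K (\<Sum>i\<in>insert k J. \<gamma> i *\<^sub>R e i)))\<^sup>2 \<rbrakk>
         \<Longrightarrow> omp_reach K e \<epsilon> v\<epsilon> (insert k J) \<beta>'"

text \<open>alpha_hat is a possible output of OMP: coefficient vector of a final (stopping) iterate.\<close>
definition omp_result :: "('b::real_normed_vector \<Rightarrow> 'h::real_inner) \<Rightarrow> (int \<Rightarrow> 'b) \<Rightarrow> real \<Rightarrow> 'h \<Rightarrow> (int \<Rightarrow> real) \<Rightarrow> bool" where
  "omp_result K e \<epsilon> v\<epsilon> \<alpha>h \<longleftrightarrow> (\<exists>J. omp_reach K e \<epsilon> v\<epsilon> J \<alpha>h \<and>
      norm (v\<epsilon> - K (\<Sum>i\<in>J. \<alpha>h i *\<^sub>R e i)) \<le> \<epsilon>)"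

end

theory Submission imports Defs begin

text \<open>If the cumulative coherence \<open>\<mu>\<close> of \<open>\<D>(I)\<close> is below 1, every combination \<open>x = \<Sum>\<^sub>i\<^sub>\<in>\<^sub>I \<gamma>\<^sub>i d\<^sub>i\<close> has some
  \<open>|\<langle>x, d\<^sub>j\<rangle>| \<ge> (1 - \<mu>) max |\<gamma>|\<close>; in particular the synthesis map is injective on \<open>I\<close> and the
  pseudoinverse is the coefficient vector of the orthogonal projection. As long as OMP has not
  selected all of \<open>I\<close>, the residual is noise plus a combination of \<open>\<D>(I)\<close> with a coefficient of
  size at least \<open>min |\<alpha>\<^sub>i| \<parallel>Ke\<^sub>i\<parallel>\<close>; writing an atom \<open>d\<^sub>k\<close>, \<open>k \<notin> I\<close>, through its projection
  coefficients shows that the \<open>\<epsilon>\<close>ERC makes its correlation with the residual strictly smaller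
  than that of some atom of \<open>I\<close>. So OMP only selects indices of \<open>I\<close>, stops at the latest once all
  of \<open>I\<close> is selected, and the coefficient error is controlled by the residual bound \<open>2\<epsilon>\<close>.\<close>

lemma l1norm_eq_sum:
  assumes "finite I" "\<forall>i. i \<notin> I \<longrightarrow> x i = 0"
  shows "l1norm x = (\<Sum>i\<in>I. \<bar>x i\<bar>)"
proof -
  have "l1norm x = infsum (\<lambda>i. \<bar>x i\<bar>) I"
    unfolding l1norm_def by (rule infsum_cong_neutral) (use assms in auto)
  also have "\<dots> = (\<Sum>i\<in>I. \<bar>x i\<bar>)" using assms(1) by simp
  finally show ?thesis .
qed

lemma exists_orthogonal_residual:
  fixes d :: "int \<Rightarrow> 'h::real_inner"
  assumes "finite I"
  shows "\<exists>c. (\<forall>i. i \<notin> I \<longrightarrow> c i = 0) \<and> (\<forall>j\<in>I. (h - (\<Sum>i\<in>I. c i *\<^sub>R d i)) \<bullet> d j = 0)"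
  using assms
proof (induction I arbitrary: h rule: finite_induct)
  case empty
  show ?case by (rule exI[of _ "\<lambda>_. 0"]) simp
next
  case (insert u S)
  obtain c where c0: "\<forall>i. i \<notin> S \<longrightarrow> c i = 0"
    and r_orth: "\<forall>j\<in>S. (h - (\<Sum>i\<in>S. c i *\<^sub>R d i)) \<bullet> d j = 0"
    using insert.IH by blast
  obtain \<delta> where \<delta>0: "\<forall>i. i \<notin> S \<longrightarrow> \<delta> i = 0"
    and w_orth: "\<forall>j\<in>S. (d u - (\<Sum>i\<in>S. \<delta> i *\<^sub>R d i)) \<bullet> d j = 0"
    using insert.IH by blast
  define r where "r = h - (\<Sum>i\<in>S. c i *\<^sub>R d i)"
  define w where "w = d u - (\<Sum>i\<in>S. \<delta> i *\<^sub>R d i)"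
  define t where "t = (r \<bullet> w) / (w \<bullet> w)"
  define c' where "c' = (\<lambda>i. if i = u then t else c i - t * \<delta> i)"
  \<comment> \<open>If \<open>w = 0\<close> then \<open>t = 0\<close>, since division by zero yields zero.\<close>
  have rw: "(r - t *\<^sub>R w) \<bullet> w = 0"
    by (cases "w = 0") (simp_all add: t_def inner_diff_left)
  have orth_S: "(r - t *\<^sub>R w) \<bullet> d j = 0" if "j \<in> S" for j
    using that r_orth w_orth by (simp add: r_def w_def inner_diff_left)
  have "(\<Sum>i\<in>insert u S. c' i *\<^sub>R d i) = t *\<^sub>R d u + (\<Sum>i\<in>S. c i *\<^sub>R d i - t *\<^sub>R (\<delta> i *\<^sub>R d i))"
    using insert.hyps by (auto simp: c'_def algebra_simps intro!: sum.cong)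
  hence residual: "h - (\<Sum>i\<in>insert u S. c' i *\<^sub>R d i) = r - t *\<^sub>R w"
    by (simp add: r_def w_def sum_subtractf scaleR_sum_right algebra_simps)
  have "(r - t *\<^sub>R w) \<bullet> d u = (r - t *\<^sub>R w) \<bullet> w + (\<Sum>i\<in>S. \<delta> i * ((r - t *\<^sub>R w) \<bullet> d i))"
    by (simp add: w_def inner_diff_right inner_sum_right)
  hence "(r - t *\<^sub>R w) \<bullet> d u = 0" using rw orth_S by simp
  moreover have "\<forall>i. i \<notin> insert u S \<longrightarrow> c' i = 0" using c0 \<delta>0 by (simp add: c'_def)
  ultimately show ?case using orth_S residual by (intro exI[of _ c']) auto
qed

lemma least_squares_imp_orthogonal_residual:
  fixes d :: "int \<Rightarrow> 'h::real_inner"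
  assumes fin: "finite I" and unit: "\<forall>j\<in>I. norm (d j) = 1" and c0: "\<forall>i. i \<notin> I \<longrightarrow> c i = 0"
    and min: "\<forall>\<gamma>. (\<forall>i. i \<notin> I \<longrightarrow> \<gamma> i = 0) \<longrightarrow>
                norm (h - (\<Sum>i\<in>I. c i *\<^sub>R d i)) \<le> norm (h - (\<Sum>i\<in>I. \<gamma> i *\<^sub>R d i))"
    and j: "j \<in> I"
  shows "(h - (\<Sum>i\<in>I. c i *\<^sub>R d i)) \<bullet> d j = 0"
proof -
  define r where "r = h - (\<Sum>i\<in>I. c i *\<^sub>R d i)"
  define t where "t = r \<bullet> d j"
  define \<gamma> where "\<gamma> = c(j := c j + t)"
  have "(\<Sum>i\<in>I. \<gamma> i *\<^sub>R d i) = (\<Sum>i\<in>I. c i *\<^sub>R d i) + t *\<^sub>R d j"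
    using fin j by (simp add: \<gamma>_def sum.remove algebra_simps)
  hence "h - (\<Sum>i\<in>I. \<gamma> i *\<^sub>R d i) = r - t *\<^sub>R d j" by (simp add: r_def)
  moreover have "\<forall>i. i \<notin> I \<longrightarrow> \<gamma> i = 0" using c0 j by (auto simp: \<gamma>_def)
  ultimately have "norm r \<le> norm (r - t *\<^sub>R d j)" using min r_def by metis
  hence "(norm r)\<^sup>2 \<le> (norm (r - t *\<^sub>R d j))\<^sup>2" by simp
  also have "\<dots> = r \<bullet> r - 2 * t * (r \<bullet> d j) + t * t * (d j \<bullet> d j)"
    unfolding power2_norm_eq_inner by (simp add: inner_diff_left inner_diff_right inner_commute)
  also have "d j \<bullet> d j = 1" using unit j by (simp add: dot_square_norm)
  finally have "(norm r)\<^sup>2 \<le> r \<bullet> r - t\<^sup>2" by (simp add: t_def[symmetric] power2_eq_square)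
  hence "t\<^sup>2 \<le> 0" by (simp add: power2_norm_eq_inner)
  thus ?thesis by (simp add: r_def t_def)
qed

lemma orthogonal_residual_imp_least_squares:
  fixes d :: "int \<Rightarrow> 'h::real_inner"
  assumes "\<forall>j\<in>I. (h - (\<Sum>i\<in>I. c i *\<^sub>R d i)) \<bullet> d j = 0"
  shows "norm (h - (\<Sum>i\<in>I. c i *\<^sub>R d i)) \<le> norm (h - (\<Sum>i\<in>I. \<gamma> i *\<^sub>R d i))"
proof -
  define r where "r = h - (\<Sum>i\<in>I. c i *\<^sub>R d i)"
  define y where "y = (\<Sum>i\<in>I. (c i - \<gamma> i) *\<^sub>R d i)"
  have "orthogonal r y" using assms by (simp add: orthogonal_def y_def r_def inner_sum_right)
  moreover have "h - (\<Sum>i\<in>I. \<gamma> i *\<^sub>R d i) = r + y"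
    by (simp add: r_def y_def scaleR_diff_left sum_subtractf)
  ultimately have "(norm (h - (\<Sum>i\<in>I. \<gamma> i *\<^sub>R d i)))\<^sup>2 = (norm r)\<^sup>2 + (norm y)\<^sup>2"
    by (simp add: norm_add_Pythagorean)
  hence "(norm r)\<^sup>2 \<le> (norm (h - (\<Sum>i\<in>I. \<gamma> i *\<^sub>R d i)))\<^sup>2" by simp
  thus ?thesis unfolding r_def using power2_le_imp_le norm_ge_zero by blast
qed

lemma exists_max_on_finite:
  fixes f :: "'a \<Rightarrow> 'b::linorder"
  assumes "finite I" "I \<noteq> {}"
  obtains j0 where "j0 \<in> I" "\<forall>j\<in>I. f j \<le> f j0"
proof -
  have "Max (f ` I) \<in> f ` I" using assms by simp
  then obtain j0 where "j0 \<in> I" "f j0 = Max (f ` I)" by auto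
  with assms show thesis by (intro that) auto
qed

definition cum_coherence :: "(int \<Rightarrow> 'h::real_inner) \<Rightarrow> int set \<Rightarrow> real" where
  "cum_coherence d I = (if I = {} then 0 else Max ((\<lambda>i. \<Sum>j\<in>I - {i}. \<bar>d i \<bullet> d j\<bar>) ` I))"

lemma coh_eq_cum_coherence: "coh K e I = cum_coherence (dict K e) I"
  unfolding coh_def cum_coherence_def ..

text \<open>Diagonal dominance of the Gram matrix: test against the atom of a largest coefficient.\<close>

lemma exists_dominant_inner:
  fixes d :: "int \<Rightarrow> 'h::real_inner"
  assumes fin: "finite I" and ne: "I \<noteq> {}" and unit: "\<forall>j\<in>I. norm (d j) = 1"
    and coh: "cum_coherence d I < 1"
  shows "\<exists>j0\<in>I. \<forall>j\<in>I. \<bar>\<gamma> j\<bar> * (1 - cum_coherence d I) \<le> \<bar>(\<Sum>i\<in>I. \<gamma> i *\<^sub>R d i) \<bullet> d j0\<bar>"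
proof -
  define \<mu> where "\<mu> = cum_coherence d I"
  obtain j0 where j0: "j0 \<in> I" and max: "\<forall>j\<in>I. \<bar>\<gamma> j\<bar> \<le> \<bar>\<gamma> j0\<bar>"
    using exists_max_on_finite[OF fin ne, of "\<lambda>j. \<bar>\<gamma> j\<bar>"] by blast
  have row: "(\<Sum>l\<in>I - {j0}. \<bar>d j0 \<bullet> d l\<bar>) \<le> \<mu>"
    unfolding \<mu>_def cum_coherence_def using ne fin j0 by auto
  have "d j0 \<bullet> d j0 = 1" using unit j0 by (simp add: dot_square_norm)
  hence split: "(\<Sum>i\<in>I. \<gamma> i *\<^sub>R d i) \<bullet> d j0 = \<gamma> j0 + (\<Sum>l\<in>I - {j0}. \<gamma> l * (d l \<bullet> d j0))"
    using fin j0 by (simp add: inner_add_left inner_sum_left sum.remove)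
  have "\<bar>\<Sum>l\<in>I - {j0}. \<gamma> l * (d l \<bullet> d j0)\<bar> \<le> (\<Sum>l\<in>I - {j0}. \<bar>\<gamma> j0\<bar> * \<bar>d j0 \<bullet> d l\<bar>)"
    using max by (intro order.trans[OF sum_abs] sum_mono)
      (auto simp: abs_mult inner_commute intro: mult_right_mono)
  also have "\<dots> \<le> \<bar>\<gamma> j0\<bar> * \<mu>" using row by (simp add: sum_distrib_left[symmetric] mult_left_mono)
  finally have "\<bar>\<gamma> j0\<bar> * (1 - \<mu>) \<le> \<bar>(\<Sum>i\<in>I. \<gamma> i *\<^sub>R d i) \<bullet> d j0\<bar>"
    unfolding split by (auto simp: algebra_simps abs_if split: if_splits)
  moreover have "\<forall>j\<in>I. \<bar>\<gamma> j\<bar> * (1 - \<mu>) \<le> \<bar>\<gamma> j0\<bar> * (1 - \<mu>)"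
    using max coh by (auto simp: \<mu>_def intro: mult_right_mono)
  ultimately show ?thesis using j0 unfolding \<mu>_def by force
qed

lemma abs_coeff_le_norm_sum:
  fixes d :: "int \<Rightarrow> 'h::real_inner"
  assumes "finite I" "\<forall>j\<in>I. norm (d j) = 1" "cum_coherence d I < 1" "j \<in> I"
  shows "\<bar>\<gamma> j\<bar> * (1 - cum_coherence d I) \<le> norm (\<Sum>i\<in>I. \<gamma> i *\<^sub>R d i)"
proof -
  obtain j0 where "j0 \<in> I"
    and "\<bar>\<gamma> j\<bar> * (1 - cum_coherence d I) \<le> \<bar>(\<Sum>i\<in>I. \<gamma> i *\<^sub>R d i) \<bullet> d j0\<bar>"
    using exists_dominant_inner[of I d \<gamma>] assms by auto
  moreover have "\<bar>(\<Sum>i\<in>I. \<gamma> i *\<^sub>R d i) \<bullet> d j0\<bar> \<le> norm (\<Sum>i\<in>I. \<gamma> i *\<^sub>R d i)"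
    using Cauchy_Schwarz_ineq2[of _ "d j0"] assms(2) \<open>j0 \<in> I\<close> by simp
  ultimately show ?thesis by linarith
qed

lemma orthogonal_residual_unique:
  fixes d :: "int \<Rightarrow> 'h::real_inner"
  assumes fin: "finite I" and unit: "\<forall>j\<in>I. norm (d j) = 1" and coh: "cum_coherence d I < 1"
    and b0: "\<forall>i. i \<notin> I \<longrightarrow> b i = 0" and c0: "\<forall>i. i \<notin> I \<longrightarrow> c i = 0"
    and b_orth: "\<forall>j\<in>I. (h - (\<Sum>i\<in>I. b i *\<^sub>R d i)) \<bullet> d j = 0"
    and c_orth: "\<forall>j\<in>I. (h - (\<Sum>i\<in>I. c i *\<^sub>R d i)) \<bullet> d j = 0"
  shows "b = c"
proof -
  define x where "x = (\<Sum>i\<in>I. (b i - c i) *\<^sub>R d i)"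
  define rb where "rb = h - (\<Sum>i\<in>I. b i *\<^sub>R d i)"
  define rc where "rc = h - (\<Sum>i\<in>I. c i *\<^sub>R d i)"
  have x_eq: "x = rc - rb" by (simp add: x_def rb_def rc_def scaleR_diff_left sum_subtractf)
  have "(rc - rb) \<bullet> x = (\<Sum>i\<in>I. (b i - c i) * (rc \<bullet> d i - rb \<bullet> d i))"
    by (simp add: x_def inner_sum_right inner_diff_left)
  also have "\<dots> = 0"
    using b_orth c_orth by (intro sum.neutral) (simp add: rb_def rc_def)
  finally have "x = 0" by (simp add: x_eq)
  have "b i = c i" for i
  proof (cases "i \<in> I")
    case True
    hence "\<bar>b i - c i\<bar> * (1 - cum_coherence d I) \<le> 0"
      using abs_coeff_le_norm_sum[OF fin unit coh True, of "\<lambda>i. b i - c i"] \<open>x = 0\<close> x_def by simp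
    thus ?thesis using coh by (simp add: mult_le_0_iff)
  qed (use b0 c0 in auto)
  thus ?thesis by blast
qed

lemma pinv_orthogonal_residual:
  assumes fin: "finite I" and unit: "\<forall>j\<in>I. norm (dict K e j) = 1" and coh: "coh K e I < 1"
  shows "(\<forall>i. i \<notin> I \<longrightarrow> pinv K e I h i = 0) \<and>
         (\<forall>j\<in>I. (h - (\<Sum>i\<in>I. pinv K e I h i *\<^sub>R dict K e i)) \<bullet> dict K e j = 0)"
proof -
  note coh' = coh[unfolded coh_eq_cum_coherence]
  obtain c where c0: "\<forall>i. i \<notin> I \<longrightarrow> c i = 0"
    and c_orth: "\<forall>j\<in>I. (h - (\<Sum>i\<in>I. c i *\<^sub>R dict K e i)) \<bullet> dict K e j = 0"
    using exists_orthogonal_residual[OF fin] by blast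
  have c_lsq: "lsq_sol K e I h c"
    unfolding lsq_sol_def using c0 orthogonal_residual_imp_least_squares[OF c_orth] by blast
  have unique: "\<beta> = c" if "lsq_sol K e I h \<beta>" for \<beta>
  proof (rule orthogonal_residual_unique[OF fin unit coh' _ c0 _ c_orth])
    show b0: "\<forall>i. i \<notin> I \<longrightarrow> \<beta> i = 0" using that unfolding lsq_sol_def by blast
    show "\<forall>j\<in>I. (h - (\<Sum>i\<in>I. \<beta> i *\<^sub>R dict K e i)) \<bullet> dict K e j = 0"
      using least_squares_imp_orthogonal_residual[OF fin unit b0] that
      unfolding lsq_sol_def by blast
  qed
  have "pinv K e I h = c"
    unfolding pinv_def by (rule the_equality) (use c_lsq unique in blast)+
  thus ?thesis using c0 c_orth by simp
qed

lemma pinv_l1norm_le: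
  assumes fin: "finite I" and unit: "\<forall>j\<in>I. norm (dict K e j) = 1" and coh: "coh K e I < 1"
  shows "l1norm (pinv K e I h) \<le> real (card I) * (norm h / (1 - coh K e I))"
proof -
  define c where "c = pinv K e I h"
  define x where "x = (\<Sum>i\<in>I. c i *\<^sub>R dict K e i)"
  have "(\<forall>i. i \<notin> I \<longrightarrow> c i = 0) \<and> (\<forall>j\<in>I. (h - x) \<bullet> dict K e j = 0)"
    unfolding c_def x_def by (rule pinv_orthogonal_residual[OF fin unit coh])
  hence c0: "\<forall>i. i \<notin> I \<longrightarrow> c i = 0" and c_orth: "\<forall>j\<in>I. (h - x) \<bullet> dict K e j = 0"
    by blast+
  have "orthogonal x (h - x)"
    using c_orth unfolding orthogonal_def x_def inner_sum_left by (simp add: inner_commute)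
  hence "(norm h)\<^sup>2 = (norm x)\<^sup>2 + (norm (h - x))\<^sup>2"
    using norm_add_Pythagorean[of x "h - x"] by simp
  hence "(norm x)\<^sup>2 \<le> (norm h)\<^sup>2" by simp
  hence "norm x \<le> norm h" using norm_ge_zero power2_le_imp_le by blast
  moreover have "\<bar>c j\<bar> * (1 - coh K e I) \<le> norm x" if "j \<in> I" for j
    using abs_coeff_le_norm_sum[OF fin unit _ that, of c] coh
    unfolding coh_eq_cum_coherence x_def by blast
  ultimately have "\<bar>c j\<bar> * (1 - coh K e I) \<le> norm h" if "j \<in> I" for j
    using that by (meson order_trans)
  hence "\<bar>c j\<bar> \<le> norm h / (1 - coh K e I)" if "j \<in> I" for j
    using that coh by (simp add: pos_le_divide_eq)
  hence "(\<Sum>i\<in>I. \<bar>c i\<bar>) \<le> (\<Sum>i\<in>I. norm h / (1 - coh K e I))"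
    by (intro sum_mono)
  hence "(\<Sum>i\<in>I. \<bar>c i\<bar>) \<le> real (card I) * (norm h / (1 - coh K e I))" by simp
  thus ?thesis using l1norm_eq_sum[OF fin c0] by (simp add: c_def)
qed

text \<open>One greedy step under the exact recovery condition: an atom \<open>d\<^sub>k\<close> outside \<open>I\<close> correlates
  with the residual through its projection coefficients \<open>c\<close> onto \<open>\<D>(I)\<close>, hence by at most
  \<open>\<parallel>c\<parallel>\<^sub>1 M + N\<close>, while some atom of \<open>I\<close> correlates by at least \<open>M - N\<close>, where \<open>M\<close> is the largest
  correlation of the signal part with \<open>\<D>(I)\<close>.\<close>

lemma greedy_step_prefers_support:
  fixes d :: "int \<Rightarrow> 'h::real_inner"
  assumes fin: "finite I" and unit: "\<forall>i. norm (d i) = 1" and coh: "cum_coherence d I < 1"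
    and noise: "\<forall>i. \<bar>n \<bullet> d i\<bar> \<le> N"
    and jn: "jn \<in> I" and large: "m \<le> \<bar>\<gamma> jn\<bar>" and m: "0 < m"
    and c_orth: "\<forall>j\<in>I. (d k - (\<Sum>i\<in>I. c i *\<^sub>R d i)) \<bullet> d j = 0"
    and erc: "2 * N < m * (1 - cum_coherence d I) * (1 - (\<Sum>i\<in>I. \<bar>c i\<bar>))"
  shows "\<exists>j\<in>I. \<bar>(n + (\<Sum>i\<in>I. \<gamma> i *\<^sub>R d i)) \<bullet> d k\<bar> < \<bar>(n + (\<Sum>i\<in>I. \<gamma> i *\<^sub>R d i)) \<bullet> d j\<bar>"
proof -
  define s where "s = (\<Sum>i\<in>I. \<gamma> i *\<^sub>R d i)"
  define L where "L = (\<Sum>i\<in>I. \<bar>c i\<bar>)"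
  define \<mu> where "\<mu> = cum_coherence d I"
  obtain j1 where j1: "j1 \<in> I" and M: "\<forall>j\<in>I. \<bar>s \<bullet> d j\<bar> \<le> \<bar>s \<bullet> d j1\<bar>"
    using exists_max_on_finite[OF fin, of "\<lambda>j. \<bar>s \<bullet> d j\<bar>"] jn by blast
  obtain j0 where "j0 \<in> I" and "\<bar>\<gamma> jn\<bar> * (1 - \<mu>) \<le> \<bar>s \<bullet> d j0\<bar>"
    using exists_dominant_inner[of I d \<gamma>] fin jn unit coh by (auto simp: s_def \<mu>_def)
  moreover have "m * (1 - \<mu>) \<le> \<bar>\<gamma> jn\<bar> * (1 - \<mu>)"
    using large coh by (simp add: \<mu>_def mult_right_mono)
  ultimately have M_low: "m * (1 - \<mu>) \<le> \<bar>s \<bullet> d j1\<bar>" using M by force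
  have m_pos: "0 < m * (1 - \<mu>)" using m coh by (simp add: \<mu>_def)
  have "0 \<le> N" using noise[rule_format, of k] by linarith
  hence "0 < m * (1 - \<mu>) * (1 - L)" using erc by (simp add: L_def \<mu>_def)
  hence "0 < 1 - L" using m_pos by (simp add: zero_less_mult_iff)
  hence "m * (1 - \<mu>) * (1 - L) \<le> \<bar>s \<bullet> d j1\<bar> * (1 - L)" using M_low by (simp add: mult_right_mono)
  hence erc_M: "2 * N < \<bar>s \<bullet> d j1\<bar> * (1 - L)" using erc by (simp add: L_def \<mu>_def)
  have "s \<bullet> (d k - (\<Sum>i\<in>I. c i *\<^sub>R d i)) = (\<Sum>i\<in>I. \<gamma> i * ((d k - (\<Sum>i\<in>I. c i *\<^sub>R d i)) \<bullet> d i))"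
    by (simp add: s_def inner_sum_left inner_commute)
  also have "\<dots> = 0" using c_orth by (intro sum.neutral) simp
  finally have "s \<bullet> d k = s \<bullet> (\<Sum>i\<in>I. c i *\<^sub>R d i)" by (simp add: inner_diff_right)
  hence "\<bar>s \<bullet> d k\<bar> \<le> (\<Sum>i\<in>I. \<bar>c i\<bar> * \<bar>s \<bullet> d j1\<bar>)"
    using M by (auto simp: inner_sum_right abs_mult intro!: order.trans[OF sum_abs] sum_mono mult_left_mono)
  hence "\<bar>s \<bullet> d k\<bar> \<le> L * \<bar>s \<bullet> d j1\<bar>" by (simp add: L_def sum_distrib_right)
  hence "\<bar>(n + s) \<bullet> d k\<bar> < \<bar>(n + s) \<bullet> d j1\<bar>"
    using erc_M noise[rule_format, of k] noise[rule_format, of j1]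
    by (simp add: inner_add_left algebra_simps)
  thus ?thesis using j1 by (auto simp: s_def)
qed

locale omp_erc =
  fixes K :: "'b::real_normed_vector \<Rightarrow> 'h::real_inner"
    and e :: "int \<Rightarrow> 'b" and \<alpha> :: "int \<Rightarrow> real" and v\<epsilon> :: 'h and \<epsilon> :: real
  assumes K_linear: "bounded_linear K" and K_inj: "inj K"
    and e_unit: "\<forall>i. norm (e i) = 1"
    and finite_supp: "finite (supp \<alpha>)"
    and noise_le: "norm (v\<epsilon> - K (\<Sum>i\<in>supp \<alpha>. \<alpha> i *\<^sub>R e i)) \<le> \<epsilon>"
    and coh_less_1: "coh K e (supp \<alpha>) < 1"
    and erc: "(SUP i\<in>- supp \<alpha>. l1norm (pinv K e (supp \<alpha>) (dict K e i)))
           < 1 - 2 * nsr K e \<alpha> v\<epsilon> * (1 / (1 - coh K e (supp \<alpha>)))"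
begin

sublocale K: bounded_linear K by (rule K_linear)

abbreviation noise :: 'h where
  "noise \<equiv> v\<epsilon> - K (\<Sum>i\<in>supp \<alpha>. \<alpha> i *\<^sub>R e i)"

abbreviation noise_level :: real where
  "noise_level \<equiv> SUP i. \<bar>noise \<bullet> dict K e i\<bar>"

abbreviation min_signal :: real where
  "min_signal \<equiv> Min ((\<lambda>i. \<bar>\<alpha> i\<bar> * norm (K (e i))) ` supp \<alpha>)"

lemma Ke_nonzero: "K (e j) \<noteq> 0"
proof
  assume "K (e j) = 0"
  hence "e j = 0" using K_inj K.zero by (metis injD)
  thus False using e_unit by (metis norm_zero zero_neq_one)
qed

lemma dict_unit: "norm (dict K e j) = 1"
  using Ke_nonzero by (simp add: dict_def)

lemma K_sum_eq_dict_sum: "K (\<Sum>j\<in>J. a j *\<^sub>R e j) = (\<Sum>j\<in>J. (a j * norm (K (e j))) *\<^sub>R dict K e j)"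
  using Ke_nonzero by (simp add: K.sum K.scaleR dict_def)

lemma residual_eq_noise_plus_signal:
  assumes "J \<subseteq> supp \<alpha>" "\<forall>i. i \<notin> J \<longrightarrow> \<beta> i = 0"
  shows "v\<epsilon> - K (\<Sum>i\<in>J. \<beta> i *\<^sub>R e i)
           = noise + (\<Sum>i\<in>supp \<alpha>. ((\<alpha> i - \<beta> i) * norm (K (e i))) *\<^sub>R dict K e i)"
proof -
  have "(\<Sum>i\<in>J. \<beta> i *\<^sub>R e i) = (\<Sum>i\<in>supp \<alpha>. \<beta> i *\<^sub>R e i)"
    using assms finite_supp by (intro sum.mono_neutral_left) auto
  hence "v\<epsilon> - K (\<Sum>i\<in>J. \<beta> i *\<^sub>R e i)
      = noise + (K (\<Sum>i\<in>supp \<alpha>. \<alpha> i *\<^sub>R e i) - K (\<Sum>i\<in>supp \<alpha>. \<beta> i *\<^sub>R e i))"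
    by simp
  also have "K (\<Sum>i\<in>supp \<alpha>. \<alpha> i *\<^sub>R e i) - K (\<Sum>i\<in>supp \<alpha>. \<beta> i *\<^sub>R e i)
      = K (\<Sum>i\<in>supp \<alpha>. (\<alpha> i - \<beta> i) *\<^sub>R e i)"
    by (simp add: K.diff[symmetric] scaleR_diff_left sum_subtractf)
  finally show ?thesis unfolding K_sum_eq_dict_sum .
qed

lemma noise_le_noise_level: "\<bar>noise \<bullet> dict K e i\<bar> \<le> noise_level"
proof (rule cSUP_upper)
  have "\<bar>noise \<bullet> dict K e j\<bar> \<le> norm noise" for j
    using Cauchy_Schwarz_ineq2[of noise "dict K e j"] dict_unit by simp
  thus "bdd_above (range (\<lambda>i. \<bar>noise \<bullet> dict K e i\<bar>))" by (intro bdd_aboveI[of _ "norm noise"]) auto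
qed simp

lemma min_signal_pos:
  assumes "supp \<alpha> \<noteq> {}"
  shows "0 < min_signal"
  using assms finite_supp Ke_nonzero by (simp add: supp_def)

lemma erc_multiplied:
  assumes k: "k \<notin> supp \<alpha>" and ne: "supp \<alpha> \<noteq> {}"
  shows "2 * noise_level < min_signal * (1 - coh K e (supp \<alpha>))
           * (1 - (\<Sum>i\<in>supp \<alpha>. \<bar>pinv K e (supp \<alpha>) (dict K e k) i\<bar>))"
proof -
  define L where "L = (\<Sum>i\<in>supp \<alpha>. \<bar>pinv K e (supp \<alpha>) (dict K e k) i\<bar>)"
  define a where "a = min_signal * (1 - coh K e (supp \<alpha>))"
  have a_pos: "0 < a" using min_signal_pos[OF ne] coh_less_1 by (simp add: a_def)
  note pinv_facts = pinv_orthogonal_residual[OF finite_supp _ coh_less_1] dict_unit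
  have "L = l1norm (pinv K e (supp \<alpha>) (dict K e k))"
    using pinv_facts by (simp add: L_def l1norm_eq_sum[OF finite_supp])
  also have "\<dots> \<le> (SUP i\<in>- supp \<alpha>. l1norm (pinv K e (supp \<alpha>) (dict K e i)))"
  proof (rule cSUP_upper)
    show "bdd_above ((\<lambda>i. l1norm (pinv K e (supp \<alpha>) (dict K e i))) ` (- supp \<alpha>))"
    proof (rule bdd_aboveI)
      fix x assume "x \<in> (\<lambda>i. l1norm (pinv K e (supp \<alpha>) (dict K e i))) ` (- supp \<alpha>)"
      then obtain i where "x = l1norm (pinv K e (supp \<alpha>) (dict K e i))" by auto
      thus "x \<le> real (card (supp \<alpha>)) * (1 / (1 - coh K e (supp \<alpha>)))"
        using pinv_l1norm_le[OF finite_supp _ coh_less_1, of "dict K e i"] dict_unit by simp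
    qed
  qed (use k in simp)
  also have "\<dots> < 1 - 2 * noise_level / a"
    using erc ne by (simp add: nsr_def a_def)
  finally have "2 * noise_level / a < 1 - L" by simp
  thus ?thesis using a_pos by (simp add: L_def a_def pos_divide_less_eq mult.commute)
qed

lemma omp_selects_in_support:
  assumes J: "J \<subseteq> supp \<alpha>" "J \<noteq> supp \<alpha>" and \<beta>0: "\<forall>i. i \<notin> J \<longrightarrow> \<beta> i = 0"
    and k_max: "\<forall>j. \<bar>(v\<epsilon> - K (\<Sum>i\<in>J. \<beta> i *\<^sub>R e i)) \<bullet> dict K e j\<bar>
                   \<le> \<bar>(v\<epsilon> - K (\<Sum>i\<in>J. \<beta> i *\<^sub>R e i)) \<bullet> dict K e k\<bar>"
  shows "k \<in> supp \<alpha>"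
proof (rule ccontr)
  assume k: "k \<notin> supp \<alpha>"
  define \<gamma> where "\<gamma> = (\<lambda>i. (\<alpha> i - \<beta> i) * norm (K (e i)))"
  obtain jn where jn: "jn \<in> supp \<alpha>" "jn \<notin> J" using J by blast
  hence ne: "supp \<alpha> \<noteq> {}" by blast
  have coh': "cum_coherence (dict K e) (supp \<alpha>) < 1"
    using coh_less_1 by (simp add: coh_eq_cum_coherence)
  have large: "min_signal \<le> \<bar>\<gamma> jn\<bar>"
    using jn \<beta>0 finite_supp by (simp add: \<gamma>_def abs_mult)
  have unit: "\<forall>i. norm (dict K e i) = 1" using dict_unit by blast
  have noise: "\<forall>i. \<bar>noise \<bullet> dict K e i\<bar> \<le> noise_level" using noise_le_noise_level by blast
  have c_orth: "\<forall>j\<in>supp \<alpha>.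
      (dict K e k - (\<Sum>i\<in>supp \<alpha>. pinv K e (supp \<alpha>) (dict K e k) i *\<^sub>R dict K e i)) \<bullet> dict K e j = 0"
    using pinv_orthogonal_residual[OF finite_supp _ coh_less_1] dict_unit by blast
  have "2 * noise_level < min_signal * (1 - cum_coherence (dict K e) (supp \<alpha>))
      * (1 - (\<Sum>i\<in>supp \<alpha>. \<bar>pinv K e (supp \<alpha>) (dict K e k) i\<bar>))"
    using erc_multiplied[OF k ne] by (simp add: coh_eq_cum_coherence)
  hence "\<exists>j\<in>supp \<alpha>. \<bar>(noise + (\<Sum>i\<in>supp \<alpha>. \<gamma> i *\<^sub>R dict K e i)) \<bullet> dict K e k\<bar>
      < \<bar>(noise + (\<Sum>i\<in>supp \<alpha>. \<gamma> i *\<^sub>R dict K e i)) \<bullet> dict K e j\<bar>"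
    by (rule greedy_step_prefers_support[where \<gamma> = \<gamma>, OF finite_supp unit coh' noise jn(1) large
          min_signal_pos[OF ne] c_orth])
  moreover have "noise + (\<Sum>i\<in>supp \<alpha>. \<gamma> i *\<^sub>R dict K e i) = v\<epsilon> - K (\<Sum>i\<in>J. \<beta> i *\<^sub>R e i)"
    using residual_eq_noise_plus_signal[OF J(1) \<beta>0] by (simp add: \<gamma>_def)
  ultimately show False using k_max not_le by metis
qed

lemma omp_reach_within_support:
  assumes "omp_reach K e \<epsilon> v\<epsilon> J \<beta>"
  shows "J \<subseteq> supp \<alpha> \<and> (\<forall>i. i \<notin> J \<longrightarrow> \<beta> i = 0) \<and>
         (J = supp \<alpha> \<longrightarrow> norm (v\<epsilon> - K (\<Sum>i\<in>J. \<beta> i *\<^sub>R e i)) \<le> \<epsilon>)"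
  using assms
proof (induction rule: omp_reach.induct)
  case init
  show ?case using noise_le by auto
next
  case (step J \<beta> k \<beta>')
  have "J \<noteq> supp \<alpha>" using step.IH step.hyps(2) by auto
  hence "k \<in> supp \<alpha>" using omp_selects_in_support step.IH step.hyps(3) by blast
  moreover have "norm (v\<epsilon> - K (\<Sum>i\<in>insert k J. \<beta>' i *\<^sub>R e i)) \<le> \<epsilon>" if "insert k J = supp \<alpha>"
  proof -
    have "(norm (v\<epsilon> - K (\<Sum>i\<in>insert k J. \<beta>' i *\<^sub>R e i)))\<^sup>2 \<le> (norm noise)\<^sup>2"
      using step.hyps(5)[rule_format, of \<alpha>] that by (simp add: supp_def)
    hence "norm (v\<epsilon> - K (\<Sum>i\<in>insert k J. \<beta>' i *\<^sub>R e i)) \<le> norm noise"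
      by (rule power2_le_imp_le) simp
    thus ?thesis using noise_le by linarith
  qed
  ultimately show ?case using step by blast
qed

lemma omp_result_error_le:
  assumes "omp_result K e \<epsilon> v\<epsilon> \<alpha>h"
  shows "l1norm (\<lambda>i. \<alpha>h i - \<alpha> i) \<le> (\<Sum>j\<in>supp \<alpha>. 2 / ((1 - coh K e (supp \<alpha>)) * norm (K (e j)))) * \<epsilon>"
proof -
  obtain J where reach: "omp_reach K e \<epsilon> v\<epsilon> J \<alpha>h"
    and final: "norm (v\<epsilon> - K (\<Sum>i\<in>J. \<alpha>h i *\<^sub>R e i)) \<le> \<epsilon>"
    using assms unfolding omp_result_def by blast
  have J: "J \<subseteq> supp \<alpha>" and \<alpha>h0: "\<forall>i. i \<notin> J \<longrightarrow> \<alpha>h i = 0"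
    using omp_reach_within_support[OF reach] by auto
  define \<gamma> where "\<gamma> = (\<lambda>i. (\<alpha> i - \<alpha>h i) * norm (K (e i)))"
  have "(\<Sum>i\<in>supp \<alpha>. \<gamma> i *\<^sub>R dict K e i) = (v\<epsilon> - K (\<Sum>i\<in>J. \<alpha>h i *\<^sub>R e i)) - noise"
    using residual_eq_noise_plus_signal[OF J \<alpha>h0] by (simp add: \<gamma>_def)
  hence "norm (\<Sum>i\<in>supp \<alpha>. \<gamma> i *\<^sub>R dict K e i) \<le> norm (v\<epsilon> - K (\<Sum>i\<in>J. \<alpha>h i *\<^sub>R e i)) + norm noise"
    by (metis norm_triangle_ineq4)
  hence "norm (\<Sum>i\<in>supp \<alpha>. \<gamma> i *\<^sub>R dict K e i) \<le> 2 * \<epsilon>" using final noise_le by linarith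
  hence "\<bar>\<gamma> j\<bar> * (1 - coh K e (supp \<alpha>)) \<le> 2 * \<epsilon>" if "j \<in> supp \<alpha>" for j
    using abs_coeff_le_norm_sum[OF finite_supp _ _ that, of "dict K e" \<gamma>] dict_unit coh_less_1
    by (simp add: coh_eq_cum_coherence)
  hence "\<bar>\<alpha>h j - \<alpha> j\<bar> * ((1 - coh K e (supp \<alpha>)) * norm (K (e j))) \<le> 2 * \<epsilon>"
    if "j \<in> supp \<alpha>" for j
    using that by (simp add: \<gamma>_def abs_mult abs_minus_commute mult_ac)
  moreover have "0 < (1 - coh K e (supp \<alpha>)) * norm (K (e j))" for j
    using coh_less_1 Ke_nonzero[of j] by simp
  ultimately have "\<bar>\<alpha>h j - \<alpha> j\<bar> \<le> 2 / ((1 - coh K e (supp \<alpha>)) * norm (K (e j))) * \<epsilon>"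
    if "j \<in> supp \<alpha>" for j
    using that by (simp add: pos_le_divide_eq)
  hence "(\<Sum>i\<in>supp \<alpha>. \<bar>\<alpha>h i - \<alpha> i\<bar>)
      \<le> (\<Sum>j\<in>supp \<alpha>. 2 / ((1 - coh K e (supp \<alpha>)) * norm (K (e j))) * \<epsilon>)"
    by (intro sum_mono)
  moreover have "l1norm (\<lambda>i. \<alpha>h i - \<alpha> i) = (\<Sum>i\<in>supp \<alpha>. \<bar>\<alpha>h i - \<alpha> i\<bar>)"
    using J \<alpha>h0 by (intro l1norm_eq_sum[OF finite_supp]) (auto simp: supp_def)
  ultimately show ?thesis by (simp add: sum_distrib_right)
qed

end

theorem proposition12:
  fixes K :: "'b::banach \<Rightarrow> 'h::{real_inner, complete_space}"
    and e :: "int \<Rightarrow> 'b" and \<alpha> :: "int \<Rightarrow> real" and v\<epsilon> :: 'h and \<epsilon> :: real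
  assumes "bounded_linear K" and "inj K"
    and "\<forall>i. norm (e i) = 1"
    and "finite (supp \<alpha>)"
    and "norm (v\<epsilon> - K (\<Sum>i\<in>supp \<alpha>. \<alpha> i *\<^sub>R e i)) \<le> \<epsilon>"
    and "nsr K e \<alpha> v\<epsilon> < 1/2"
    and "coh K e (supp \<alpha>) < 1"
    and "(SUP i\<in>- supp \<alpha>. l1norm (pinv K e (supp \<alpha>) (dict K e i)))
           < 1 - 2 * nsr K e \<alpha> v\<epsilon> * (1 / (1 - coh K e (supp \<alpha>)))"
  shows "\<exists>C>0. \<forall>\<alpha>h. omp_result K e \<epsilon> v\<epsilon> \<alpha>h \<longrightarrow> l1norm (\<lambda>i. \<alpha>h i - \<alpha> i) \<le> C * \<epsilon>"
proof -
  interpret omp_erc K e \<alpha> v\<epsilon> \<epsilon>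
    using assms(1-5,7,8) by (rule omp_erc.intro)
  define S where "S = (\<Sum>j\<in>supp \<alpha>. 2 / ((1 - coh K e (supp \<alpha>)) * norm (K (e j))))"
  have "0 \<le> S" using coh_less_1 by (simp add: S_def sum_nonneg)
  have "0 \<le> \<epsilon>" using noise_le norm_ge_zero order_trans by blast
  have "l1norm (\<lambda>i. \<alpha>h i - \<alpha> i) \<le> (1 + S) * \<epsilon>" if "omp_result K e \<epsilon> v\<epsilon> \<alpha>h" for \<alpha>h
  proof -
    have "l1norm (\<lambda>i. \<alpha>h i - \<alpha> i) \<le> S * \<epsilon>" using omp_result_error_le[OF that] by (simp add: S_def)
    also have "\<dots> \<le> (1 + S) * \<epsilon>" using \<open>0 \<le> \<epsilon>\<close> by (simp add: distrib_right)
    finally show ?thesis .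
  qed
  thus ?thesis using \<open>0 \<le> S\<close> by (intro exI[of _ "1 + S"]) auto
qed

end
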